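(* Let $z=z(k,\varepsilon)$ and choose $\eta$ with $\Re(\overline z\eta)\ge0$. Then there is a constant $\rho>0$ independent of $k$ and $\varepsilon$ such that for all $k>0$ and all $v\in H^1(\Omega)$, $$\vert a_\varepsilon(v,v)\vert\ \ge\ \Im\big(\Theta\,a_\varepsilon(v,v)\big)\ \ge\ \rho\,\frac{\vert\varepsilon\vert}{k^2}\Vert v\Vert_{1,k}^2,\qquad\text{where }\Theta=-\overline z/\vert z\vert.$$
   Context: $\Omega\subset\mathbb R^d$ ($d=2,3$) a bounded Lipschitz domain with boundary $\Gamma$. $k>0$, $\varepsilon\in\mathbb R\setminus\{0\}$ with $\vert\varepsilon\vert\le C_0k^2$ for a fixed constant $C_0$, $\eta\in\mathbb C$. $z=\sqrt{k^2+{\rm i}\varepsilon}$ with the branch cut of the square root on the positive real axis (so $\Im z>0$). $a_\varepsilon(u,v)=\int_\Omega\nabla u\cdot\nabla\overline v-(k^2+{\rm i}\varepsilon)\int_\Omega u\overline v-{\rm i}\eta\int_\Gamma u\overline v$; $\Vert v\Vert_{1,k}^2=\Vert\nabla v\Vert_{L^2(\Omega)}^2+k^2\Vert v\Vert_{L^2(\Omega)}^2$. *)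

theory Defs
  imports "HOL-Analysis.Analysis"
begin

coinductive C_inf :: "('a::euclidean_space \<Rightarrow> real) \<Rightarrow> bool" where
  "(\<forall>x. f differentiable (at x)) \<Longrightarrow>
   (\<forall>b. C_inf (\<lambda>x. frechet_derivative f (at x) b)) \<Longrightarrow> C_inf f"

definition test_fun :: "'a::euclidean_space set \<Rightarrow> ('a \<Rightarrow> real) \<Rightarrow> bool" where
  "test_fun \<Omega> \<phi> \<longleftrightarrow> C_inf \<phi> \<and> compact (closure {x. \<phi> x \<noteq> 0})
      \<and> closure {x. \<phi> x \<noteq> 0} \<subseteq> \<Omega>"

definition L2 :: "'a::euclidean_space set \<Rightarrow> ('a \<Rightarrow> complex) \<Rightarrow> bool" where
  "L2 \<Omega> v \<longleftrightarrow> v \<in> borel_measurable (lebesgue_on \<Omega>)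
      \<and> integrable (lebesgue_on \<Omega>) (\<lambda>x. (cmod (v x))\<^sup>2)"

definition weak_partial ::
  "'a::euclidean_space set \<Rightarrow> ('a \<Rightarrow> complex) \<Rightarrow> 'a \<Rightarrow> ('a \<Rightarrow> complex) \<Rightarrow> bool" where
  "weak_partial \<Omega> v b g \<longleftrightarrow> (\<forall>\<phi>. test_fun \<Omega> \<phi> \<longrightarrow>
      integral\<^sup>L (lebesgue_on \<Omega>) (\<lambda>x. v x * of_real (frechet_derivative \<phi> (at x) b))
      = - integral\<^sup>L (lebesgue_on \<Omega>) (\<lambda>x. g x * of_real (\<phi> x)))"

definition H1 :: "'a::euclidean_space set \<Rightarrow> ('a \<Rightarrow> complex) \<Rightarrow> bool" where
  "H1 \<Omega> v \<longleftrightarrow> L2 \<Omega> v \<and> (\<forall>b\<in>Basis. \<exists>g. L2 \<Omega> g \<and> weak_partial \<Omega> v b g)"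

text \<open>A choice of the weak partial derivative (unique a.e.).\<close>
definition wgrad :: "'a::euclidean_space set \<Rightarrow> ('a \<Rightarrow> complex) \<Rightarrow> 'a \<Rightarrow> 'a \<Rightarrow> complex" where
  "wgrad \<Omega> v b = (SOME g. L2 \<Omega> g \<and> weak_partial \<Omega> v b g)"

definition L2_norm_sq :: "'a::euclidean_space set \<Rightarrow> ('a \<Rightarrow> complex) \<Rightarrow> real" where
  "L2_norm_sq \<Omega> v = integral\<^sup>L (lebesgue_on \<Omega>) (\<lambda>x. (cmod (v x))\<^sup>2)"

definition norm1k_sq :: "real \<Rightarrow> 'a::euclidean_space set \<Rightarrow> ('a \<Rightarrow> complex) \<Rightarrow> real" where
  "norm1k_sq k \<Omega> v = (\<Sum>b\<in>Basis. L2_norm_sq \<Omega> (wgrad \<Omega> v b)) + k\<^sup>2 * L2_norm_sq \<Omega> v"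

definition lipschitz_domain :: "'a::euclidean_space set \<Rightarrow> bool" where
  "lipschitz_domain \<Omega> \<longleftrightarrow> open \<Omega> \<and> connected \<Omega> \<and> \<Omega> \<noteq> {} \<and> bounded \<Omega> \<and>
     (\<forall>x0\<in>frontier \<Omega>. \<exists>r>0. \<exists>e. norm e = 1 \<and> (\<exists>h L. lipschitz_on L {y. y \<bullet> e = 0} h \<and>
        \<Omega> \<inter> ball x0 r = {x \<in> ball x0 r. x \<bullet> e < h (x - (x \<bullet> e) *\<^sub>R e)}))"

definition zk :: "real \<Rightarrow> real \<Rightarrow> complex" where
  "zk k \<epsilon> = (THE z. z\<^sup>2 = of_real (k\<^sup>2) + \<i> * of_real \<epsilon> \<and> Im z > 0)"

text \<open>The sesquilinear form a_eps; sigma is the surface measure on Gamma and tr the trace operator.\<close>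
definition a_eps ::
  "'a::euclidean_space set \<Rightarrow> 'a measure \<Rightarrow> (('a \<Rightarrow> complex) \<Rightarrow> 'a \<Rightarrow> complex)
   \<Rightarrow> real \<Rightarrow> real \<Rightarrow> complex \<Rightarrow> ('a \<Rightarrow> complex) \<Rightarrow> ('a \<Rightarrow> complex) \<Rightarrow> complex" where
  "a_eps \<Omega> \<sigma> tr k \<epsilon> \<eta> u v =
     (\<Sum>b\<in>Basis. integral\<^sup>L (lebesgue_on \<Omega>) (\<lambda>x. wgrad \<Omega> u b x * cnj (wgrad \<Omega> v b x)))
     - (of_real (k\<^sup>2) + \<i> * of_real \<epsilon>) * integral\<^sup>L (lebesgue_on \<Omega>) (\<lambda>x. u x * cnj (v x))
     - \<i> * \<eta> * integral\<^sup>L \<sigma> (\<lambda>x. tr u x * cnj (tr v x))"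

end

theory Submission
  imports Defs
begin

text \<open>Writing a(v,v) = G - z^2 M - i eta B with G = |grad v|^2, M = |v|^2 and B = |v|^2 on the
  boundary, multiplication by Theta = -conj z/|z| gives
  Im (Theta a(v,v)) = (Im z G + |z|^2 Im z M + Re (conj z eta) B) / |z|, a sum of nonnegative terms.
  Since eps = Im (z^2) = 2 Re z Im z, we have Im z / |z| >= |eps| / (2 |z|^2), while
  |z|^2 = sqrt (k^4 + eps^2) <= sqrt (1 + C0^2) k^2 and |z|^2 >= k^2; so rho = 1 / (2 sqrt (1 + C0^2))
  works. The other inequality is just Im w <= |w| together with |Theta| = 1.\<close>

lemma integral_mult_cnj_self:
  "integral\<^sup>L M (\<lambda>x. f x * cnj (f x)) = of_real (integral\<^sup>L M (\<lambda>x. (cmod (f x))\<^sup>2))"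
proof -
  have "(\<lambda>x. f x * cnj (f x)) = (\<lambda>x. complex_of_real ((cmod (f x))\<^sup>2))"
    by (intro ext) (metis complex_norm_square)
  then show ?thesis by (simp del: of_real_power)
qed

lemma a_eps_diag:
  "a_eps \<Omega> \<sigma> tr k \<epsilon> \<eta> v v =
     of_real (\<Sum>b\<in>Basis. L2_norm_sq \<Omega> (wgrad \<Omega> v b))
     - (of_real (k\<^sup>2) + \<i> * of_real \<epsilon>) * of_real (L2_norm_sq \<Omega> v)
     - \<i> * \<eta> * of_real (integral\<^sup>L \<sigma> (\<lambda>x. (cmod (tr v x))\<^sup>2))"
  by (simp add: a_eps_def integral_mult_cnj_self L2_norm_sq_def)

lemma L2_norm_sq_nonneg: "L2_norm_sq \<Omega> v \<ge> 0"
  unfolding L2_norm_sq_def by (intro integral_nonneg_AE) auto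

lemma zk_root:
  assumes "\<epsilon> \<noteq> 0"
  shows "(zk k \<epsilon>)\<^sup>2 = of_real (k\<^sup>2) + \<i> * of_real \<epsilon>" and "Im (zk k \<epsilon>) > 0"
proof -
  define w where "w = of_real (k\<^sup>2) + \<i> * of_real \<epsilon>"
  define s0 where "s0 = csqrt w"
  have s0: "s0\<^sup>2 = w" unfolding s0_def by (rule power2_csqrt)
  have "Im s0 \<noteq> 0"
  proof
    assume "Im s0 = 0"
    then have "Im (s0\<^sup>2) = 0" by (simp add: power2_eq_square)
    then show False using s0 assms by (simp add: w_def)
  qed
  define s where "s = (if Im s0 > 0 then s0 else - s0)"
  have s: "s\<^sup>2 = w" "Im s > 0"
    using s0 \<open>Im s0 \<noteq> 0\<close> by (simp_all add: s_def)
  have uniq: "z = s" if "z\<^sup>2 = w" "Im z > 0" for z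
  proof -
    have "z\<^sup>2 = s\<^sup>2" using that(1) s(1) by simp
    then have "z = s \<or> z = - s" by (simp add: power2_eq_iff)
    then show ?thesis using that(2) s(2) by auto
  qed
  have "zk k \<epsilon> = s"
    unfolding zk_def w_def[symmetric] by (rule the_equality) (use s uniq in blast)+
  then show "(zk k \<epsilon>)\<^sup>2 = of_real (k\<^sup>2) + \<i> * of_real \<epsilon>" and "Im (zk k \<epsilon>) > 0"
    using s by (simp_all add: w_def)
qed

lemma Im_rotated_form:
  fixes z \<eta> :: complex and G M B :: real
  shows "Im (- cnj z / of_real (cmod z) * (of_real G - z\<^sup>2 * of_real M - \<i> * \<eta> * of_real B))
       = (Im z * G + (cmod z)\<^sup>2 * Im z * M + Re (cnj z * \<eta>) * B) / cmod z"
proof -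
  let ?a = "of_real G - z\<^sup>2 * of_real M - \<i> * \<eta> * of_real B"
  have "Im (- cnj z / of_real (cmod z) * ?a) = Im (- cnj z * ?a) / cmod z"
    by (metis Im_divide_of_real times_divide_eq_left)
  also have "Im (- cnj z * ?a) = Im z * G + ((Re z)\<^sup>2 + (Im z)\<^sup>2) * Im z * M + Re (cnj z * \<eta>) * B"
    by (simp add: power2_eq_square algebra_simps)
  also have "(Re z)\<^sup>2 + (Im z)\<^sup>2 = (cmod z)\<^sup>2"
    by (rule cmod_power2[symmetric])
  finally show ?thesis .
qed

lemma abs_Im_power2_le: "\<bar>Im (z\<^sup>2)\<bar> \<le> 2 * cmod z * \<bar>Im z\<bar>"
proof -
  have "\<bar>Im (z\<^sup>2)\<bar> = 2 * \<bar>Re z\<bar> * \<bar>Im z\<bar>"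
    by (simp add: power2_eq_square abs_mult)
  also have "\<dots> \<le> 2 * cmod z * \<bar>Im z\<bar>"
    by (simp add: abs_Re_le_cmod mult_right_mono)
  finally show ?thesis .
qed

lemma cmod_power2_bounds:
  fixes k \<epsilon> C0 :: real
  assumes "\<bar>\<epsilon>\<bar> \<le> C0 * k\<^sup>2"
  shows "k\<^sup>2 \<le> cmod (of_real (k\<^sup>2) + \<i> * of_real \<epsilon>)"
    and "cmod (of_real (k\<^sup>2) + \<i> * of_real \<epsilon>) \<le> sqrt (1 + C0\<^sup>2) * k\<^sup>2"
proof -
  have w: "cmod (of_real (k\<^sup>2) + \<i> * of_real \<epsilon>) = sqrt ((k\<^sup>2)\<^sup>2 + \<epsilon>\<^sup>2)"
    by (simp add: cmod_def)
  show "k\<^sup>2 \<le> cmod (of_real (k\<^sup>2) + \<i> * of_real \<epsilon>)"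
    unfolding w by (rule real_le_rsqrt) simp
  have "\<bar>\<epsilon>\<bar>\<^sup>2 \<le> (C0 * k\<^sup>2)\<^sup>2"
    using assms by (intro power_mono) auto
  then have "(k\<^sup>2)\<^sup>2 + \<epsilon>\<^sup>2 \<le> (sqrt (1 + C0\<^sup>2) * k\<^sup>2)\<^sup>2"
    by (simp add: power_mult_distrib algebra_simps)
  then have "sqrt ((k\<^sup>2)\<^sup>2 + \<epsilon>\<^sup>2) \<le> sqrt ((sqrt (1 + C0\<^sup>2) * k\<^sup>2)\<^sup>2)"
    by (rule real_sqrt_le_mono)
  then show "cmod (of_real (k\<^sup>2) + \<i> * of_real \<epsilon>) \<le> sqrt (1 + C0\<^sup>2) * k\<^sup>2"
    unfolding w by simp
qed

lemma Im_rotation_le_cmod: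
  fixes z a :: complex
  assumes "z \<noteq> 0"
  shows "Im (- cnj z / of_real (cmod z) * a) \<le> cmod a"
proof -
  have "Im (- cnj z / of_real (cmod z) * a) \<le> cmod (- cnj z / of_real (cmod z) * a)"
    using abs_Im_le_cmod by (rule abs_le_D1)
  also have "\<dots> = cmod a"
    using assms by (simp add: norm_mult norm_divide)
  finally show ?thesis .
qed

lemma rotated_form_lower_bound:
  fixes z \<eta> :: complex and k \<epsilon> C0 G M B :: real
  assumes z: "z\<^sup>2 = of_real (k\<^sup>2) + \<i> * of_real \<epsilon>" "Im z > 0"
    and k: "k > 0" and eC: "\<bar>\<epsilon>\<bar> \<le> C0 * k\<^sup>2" and \<eta>: "Re (cnj z * \<eta>) \<ge> 0"
    and G: "G \<ge> 0" and M: "M \<ge> 0" and B: "B \<ge> 0"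
  shows "1 / (2 * sqrt (1 + C0\<^sup>2)) * \<bar>\<epsilon>\<bar> / k\<^sup>2 * (G + k\<^sup>2 * M)
       \<le> Im (- cnj z / of_real (cmod z) * (of_real G - z\<^sup>2 * of_real M - \<i> * \<eta> * of_real B))"
proof -
  define S where "S = sqrt (1 + C0\<^sup>2)"
  define r where "r = cmod z"
  have S: "S > 0" by (simp add: S_def add_pos_nonneg)
  have r: "r > 0" using z(2) by (auto simp: r_def)
  have r2: "r\<^sup>2 = cmod (of_real (k\<^sup>2) + \<i> * of_real \<epsilon>)"
    unfolding r_def z(1)[symmetric] by (simp only: norm_power)
  have k2r: "k\<^sup>2 \<le> r\<^sup>2" and rS: "r\<^sup>2 \<le> S * k\<^sup>2"
    unfolding r2 S_def using cmod_power2_bounds[OF eC] by auto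
  have "\<bar>\<epsilon>\<bar> \<le> 2 * r * Im z"
    using abs_Im_power2_le[of z] z by (simp add: r_def)
  have ratio: "1 / (2 * S) * \<bar>\<epsilon>\<bar> / k\<^sup>2 \<le> Im z / r"
  proof -
    have "1 / (2 * S) * \<bar>\<epsilon>\<bar> / k\<^sup>2 = \<bar>\<epsilon>\<bar> / (2 * (S * k\<^sup>2))" by (simp add: field_simps)
    also have "\<dots> \<le> \<bar>\<epsilon>\<bar> / (2 * r\<^sup>2)"
      using rS r S k by (intro divide_left_mono) auto
    also have "\<dots> \<le> (2 * r * Im z) / (2 * r\<^sup>2)"
      using \<open>\<bar>\<epsilon>\<bar> \<le> 2 * r * Im z\<close> r by (intro divide_right_mono) auto
    also have "\<dots> = Im z / r" using r by (simp add: power2_eq_square)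
    finally show ?thesis .
  qed
  have "1 / (2 * S) * \<bar>\<epsilon>\<bar> / k\<^sup>2 * (G + k\<^sup>2 * M) \<le> Im z / r * (G + k\<^sup>2 * M)"
    using ratio G M by (intro mult_right_mono) auto
  also have "\<dots> \<le> Im z / r * (G + r\<^sup>2 * M)"
    using k2r M z(2) r by (intro mult_left_mono) (auto intro: mult_right_mono)
  also have "\<dots> = (Im z * G + r\<^sup>2 * Im z * M) / r"
    by (simp add: field_simps)
  also have "\<dots> \<le> (Im z * G + r\<^sup>2 * Im z * M + Re (cnj z * \<eta>) * B) / r"
    using \<eta> B r by (intro divide_right_mono) auto
  also have "\<dots> = Im (- cnj z / of_real (cmod z) * (of_real G - z\<^sup>2 * of_real M - \<i> * \<eta> * of_real B))"
    unfolding Im_rotated_form r_def ..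
  finally show ?thesis by (simp add: S_def)
qed

theorem lemma2p4:
  fixes \<Omega> :: "'a::euclidean_space set" and C0 :: real
    and \<sigma> :: "'a measure" and tr :: "('a \<Rightarrow> complex) \<Rightarrow> 'a \<Rightarrow> complex"
  assumes dim: "DIM('a) = 2 \<or> DIM('a) = 3"
    and dom: "lipschitz_domain \<Omega>"
    and sigma_space: "space \<sigma> = frontier \<Omega>"
    and tr_L2: "\<forall>v. H1 \<Omega> v \<longrightarrow> tr v \<in> borel_measurable \<sigma>
                        \<and> integrable \<sigma> (\<lambda>x. (cmod (tr v x))\<^sup>2)"
    and tr_restr: "\<forall>v. H1 \<Omega> v \<longrightarrow> continuous_on (closure \<Omega>) v \<longrightarrow>
                        (\<forall>x\<in>frontier \<Omega>. tr v x = v x)"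
  shows "\<exists>\<rho>>0. \<forall>k \<epsilon> \<eta> v. k > 0 \<longrightarrow> \<epsilon> \<noteq> 0 \<longrightarrow> \<bar>\<epsilon>\<bar> \<le> C0 * k\<^sup>2 \<longrightarrow>
            Re (cnj (zk k \<epsilon>) * \<eta>) \<ge> 0 \<longrightarrow> H1 \<Omega> v \<longrightarrow>
            cmod (a_eps \<Omega> \<sigma> tr k \<epsilon> \<eta> v v)
              \<ge> Im ((- cnj (zk k \<epsilon>) / of_real (cmod (zk k \<epsilon>))) * a_eps \<Omega> \<sigma> tr k \<epsilon> \<eta> v v)
            \<and> Im ((- cnj (zk k \<epsilon>) / of_real (cmod (zk k \<epsilon>))) * a_eps \<Omega> \<sigma> tr k \<epsilon> \<eta> v v)
              \<ge> \<rho> * \<bar>\<epsilon>\<bar> / k\<^sup>2 * norm1k_sq k \<Omega> v"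
proof (intro exI[of _ "1 / (2 * sqrt (1 + C0\<^sup>2))"] conjI allI impI)
  show "1 / (2 * sqrt (1 + C0\<^sup>2)) > 0" by (simp add: add_pos_nonneg)
  fix k \<epsilon> :: real and \<eta> :: complex and v
  assume k: "k > 0" and "\<epsilon> \<noteq> 0" and eC: "\<bar>\<epsilon>\<bar> \<le> C0 * k\<^sup>2"
    and \<eta>: "Re (cnj (zk k \<epsilon>) * \<eta>) \<ge> 0"
  note z = zk_root[OF \<open>\<epsilon> \<noteq> 0\<close>, of k]
  show "Im (- cnj (zk k \<epsilon>) / of_real (cmod (zk k \<epsilon>)) * a_eps \<Omega> \<sigma> tr k \<epsilon> \<eta> v v)
      \<le> cmod (a_eps \<Omega> \<sigma> tr k \<epsilon> \<eta> v v)"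
    using z(2) by (intro Im_rotation_le_cmod) auto
  have "(\<Sum>b\<in>Basis. L2_norm_sq \<Omega> (wgrad \<Omega> v b)) \<ge> 0"
    by (intro sum_nonneg L2_norm_sq_nonneg)
  moreover have "integral\<^sup>L \<sigma> (\<lambda>x. (cmod (tr v x))\<^sup>2) \<ge> 0"
    by (intro integral_nonneg_AE) auto
  ultimately show "1 / (2 * sqrt (1 + C0\<^sup>2)) * \<bar>\<epsilon>\<bar> / k\<^sup>2 * norm1k_sq k \<Omega> v
      \<le> Im (- cnj (zk k \<epsilon>) / of_real (cmod (zk k \<epsilon>)) * a_eps \<Omega> \<sigma> tr k \<epsilon> \<eta> v v)"
    unfolding a_eps_diag z(1)[symmetric] norm1k_sq_def
    using rotated_form_lower_bound[OF z k eC \<eta>] L2_norm_sq_nonneg by blast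
qed

end
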